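(* Let $n\ge1$, with notation as in the context. Then in $\mathfrak{gl}(n)$ $$\sum_{k=0}^{n-1}\left(\frac{1}{c_{k0}}f_{k0}(H)^2+2\sum_{l=1}^{k}\frac{1}{c_{kl}}f_{kl}(H)^2T_1(H)\cdots T_l(H)-\frac{2k+1}{n}\right)=-H;$$ equivalently, for every $i=1,\dots,n$, the left side evaluated at $H=\alpha_i$ equals $-\alpha_i$.
   Context: Principal embedding of $\mathfrak{sl}(2)$ in $\mathfrak{gl}(n)$: $Y=\sum_{i=1}^{n-1}E_{i+1,i}$, $H=\sum_{i=1}^n(n-2i+1)E_{ii}$, $X=\sum_{i=1}^{n-1}i(n-i)E_{i,i+1}$. $\alpha_i=n-2i+1$, $T_i(H)=\frac14(n^2-(H+2i-1)^2)$; for a polynomial $f$, $f(H)=\mathrm{diag}(f(\alpha_1),\dots,f(\alpha_n))$ and scalars are scalar matrices. For $0\le l\le k\le n-1$, $f_{kl}$ is the unique polynomial of degree $<n-l$ with $(\mathrm{ad}\,Y)^{k-l}(X^k)=X^lf_{kl}(H)$. $c_{kl}=\dfrac{(k-l)!\,(k!)^2}{(k+l)!\,(2k+1)}\,n(n^2-1^2)\cdots(n^2-k^2)$. *)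

theory Defs
  imports "Jordan_Normal_Form.Matrix" "HOL-Computational_Algebra.Polynomial"
begin

text \<open>Matrices in gl(n) are n x n real matrices (JNF type 'a mat); indices are 0-based,
  so the paper's E_{i,j} (1-based) is the entry (i-1, j-1).\<close>

definition Ymat :: "nat \<Rightarrow> real mat" where
  "Ymat n = mat n n (\<lambda>(r, c). if r = c + 1 then 1 else 0)"

definition Hmat :: "nat \<Rightarrow> real mat" where
  "Hmat n = mat n n (\<lambda>(r, c). if r = c then real n - 2 * real (r + 1) + 1 else 0)"

definition Xmat :: "nat \<Rightarrow> real mat" where
  "Xmat n = mat n n (\<lambda>(r, c). if c = r + 1 then real (r + 1) * real (n - (r + 1)) else 0)"

text \<open>alpha_i for 1-based i\<close>
definition alpha :: "nat \<Rightarrow> nat \<Rightarrow> real" where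
  "alpha n i = real n - 2 * real i + 1"

definition Tpoly :: "nat \<Rightarrow> nat \<Rightarrow> real \<Rightarrow> real" where
  "Tpoly n i h = ((real n)^2 - (h + 2 * real i - 1)^2) / 4"

text \<open>f(H) = diag(f(alpha_1),...,f(alpha_n))\<close>
definition polyH :: "nat \<Rightarrow> real poly \<Rightarrow> real mat" where
  "polyH n p = mat n n (\<lambda>(r, c). if r = c then poly p (alpha n (r + 1)) else 0)"

definition adY :: "nat \<Rightarrow> real mat \<Rightarrow> real mat" where
  "adY n A = Ymat n * A - A * Ymat n"

definition fkl :: "nat \<Rightarrow> nat \<Rightarrow> nat \<Rightarrow> real poly" where
  "fkl n k l = (THE p. degree p < n - l \<and>
       (adY n ^^ (k - l)) (Xmat n ^\<^sub>m k) = Xmat n ^\<^sub>m l * polyH n p)"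

definition ckl :: "nat \<Rightarrow> nat \<Rightarrow> nat \<Rightarrow> real" where
  "ckl n k l = fact (k - l) * (fact k)^2 / (fact (k + l) * (2 * real k + 1))
      * real n * (\<Prod>j=1..k. (real n)^2 - (real j)^2)"

end

theory Submission
  imports Defs "Jordan_Normal_Form.Determinant"
begin

text \<open>
  Put \<open>M\<^sub>k\<^sub>l = (ad Y)\<^bsup>k-l\<^esup>(X\<^sup>k) = X\<^sup>l f\<^sub>k\<^sub>l(H)\<close>. This matrix lives on the
  \<open>l\<close>-th superdiagonal, its entry \<open>(a, a+l)\<close> being \<open>x\<^sub>a\<^sub>,\<^sub>l f\<^sub>k\<^sub>l(\<alpha>\<^sub>a\<^sub>+\<^sub>l\<^sub>+\<^sub>1)\<close>,
  where \<open>x\<^sub>a\<^sub>,\<^sub>l\<close> is the entry \<open>(a, a+l)\<close> of \<open>X\<^sup>l\<close>.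
  Conjugating the transpose by a diagonal matrix gives an anti-automorphism \<open>\<phi>\<close> with
  \<open>\<phi>(X) = Y\<close>, for which \<open>ad Y\<close> and \<open>ad X\<close> are adjoint up to sign under
  \<open>(A, B) \<mapsto> tr (A \<phi>(B))\<close>. The sl(2) relations then give
  \<open>tr (M\<^sub>k\<^sub>l \<phi>(M\<^sub>k\<^sub>'\<^sub>l)) = \<delta>\<^sub>k\<^sub>k\<^sub>' c\<^sub>k\<^sub>l\<close>; evaluating \<open>tr (X\<^sup>k Y\<^sup>k)\<close> by an upper
  Vandermonde convolution identifies the constant with \<open>c\<^sub>k\<^sub>l\<close>. So for fixed \<open>l\<close> the
  \<open>n - l\<close> vectors \<open>(M\<^sub>k\<^sub>l(a, a+l))\<^sub>a\<close> are orthogonal for the weights \<open>1 / x\<^sub>a\<^sub>,\<^sub>l\<close>, and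
  as they form a square system the columns are orthogonal too:
  \<open>\<Sum>\<^sub>k M\<^sub>k\<^sub>l(a, a+l)\<^sup>2 / c\<^sub>k\<^sub>l = x\<^sub>a\<^sub>,\<^sub>l\<close>.
  Since \<open>T\<^sub>1 \<cdots> T\<^sub>l(\<alpha>\<^sub>i) = x\<^sub>i\<^sub>-\<^sub>l\<^sub>-\<^sub>1\<^sub>,\<^sub>l\<close> for \<open>l < i\<close> and \<open>T\<^sub>i(\<alpha>\<^sub>i) = 0\<close>, this says
  that at \<open>H = \<alpha>\<^sub>i\<close> the terms with a given \<open>l\<close> add up to \<open>1\<close> if \<open>l < i\<close> and to \<open>0\<close>
  otherwise. The left-hand side is therefore \<open>1 + 2(i - 1) - n = -\<alpha>\<^sub>i\<close>.
\<close>

section \<open>Commutators and the trace form\<close>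

lemma index_mult_mat_sum:
  "i < dim_row A \<Longrightarrow> j < dim_col B \<Longrightarrow> dim_col A = dim_row B \<Longrightarrow>
    (A * B) $$ (i, j) = (\<Sum>t<dim_row B. A $$ (i, t) * B $$ (t, j))"
  by (simp add: scalar_prod_def lessThan_atLeast0)

declare index_mult_mat(1) [simp del]

lemma smult_smult_mat: "a \<cdot>\<^sub>m (b \<cdot>\<^sub>m A) = (a * b :: 'a::semigroup_mult) \<cdot>\<^sub>m A"
  by (rule eq_matI) (auto simp: mult.assoc)

lemma pow_mat_commute: "A \<in> carrier_mat n n \<Longrightarrow> A * A ^\<^sub>m k = A ^\<^sub>m k * A"
proof (induction k)
  case (Suc k)
  have "A * A ^\<^sub>m Suc k = (A * A ^\<^sub>m k) * A"
    using Suc.prems by (simp add: assoc_mult_mat[of _ n n _ n _ n])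
  then show ?case using Suc by simp
qed simp

definition ad :: "'a::ring mat \<Rightarrow> 'a mat \<Rightarrow> 'a mat" where
  "ad Z A = Z * A - A * Z"

lemma ad_dim [simp]: "dim_row (ad Z A) = dim_row A" "dim_col (ad Z A) = dim_col Z"
  by (simp_all add: ad_def)

lemma ad_carrier [simp]:
  "Z \<in> carrier_mat n n \<Longrightarrow> A \<in> carrier_mat n n \<Longrightarrow> ad Z A \<in> carrier_mat n n"
  by (auto simp: ad_def intro!: minus_carrier_mat mult_carrier_mat)

lemma ad_pow_carrier [simp]:
  "Z \<in> carrier_mat n n \<Longrightarrow> A \<in> carrier_mat n n \<Longrightarrow> (ad Z ^^ m) A \<in> carrier_mat n n"
  by (induction m) auto

lemma ad_smult:
  fixes Z A :: "'a::comm_ring_1 mat"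
  assumes "Z \<in> carrier_mat n n" "A \<in> carrier_mat n n"
  shows "ad Z (c \<cdot>\<^sub>m A) = c \<cdot>\<^sub>m ad Z A"
  by (rule eq_matI) (use assms in \<open>auto simp: ad_def index_mult_mat_sum sum_distrib_left algebra_simps\<close>)

lemma ad_zero: "Z \<in> carrier_mat n n \<Longrightarrow> ad Z (0\<^sub>m n n) = 0\<^sub>m n n"
  by (rule eq_matI) (auto simp: ad_def index_mult_mat_sum)

lemma ad_pow_zero: "Z \<in> carrier_mat n n \<Longrightarrow> (ad Z ^^ m) (0\<^sub>m n n) = 0\<^sub>m n n"
  by (induction m) (simp_all add: ad_zero)

lemma ad_pow_mat_self: "A \<in> carrier_mat n n \<Longrightarrow> ad A (A ^\<^sub>m k) = 0\<^sub>m n n"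
  by (rule eq_matI) (simp_all add: ad_def pow_mat_commute)

definition trace :: "'a::comm_ring_1 mat \<Rightarrow> 'a" where
  "trace A = (\<Sum>i<dim_row A. A $$ (i, i))"

lemma trace_mult_comm:
  assumes "A \<in> carrier_mat n n" "B \<in> carrier_mat n n"
  shows "trace (A * B) = trace (B * A)"
proof -
  have expand: "trace (C * D) = (\<Sum>i<n. \<Sum>t<n. C $$ (i, t) * D $$ (t, i))"
    if "C \<in> carrier_mat n n" "D \<in> carrier_mat n n" for C D :: "'a mat"
    using that unfolding trace_def by (simp add: index_mult_mat_sum)
  have "trace (A * B) = (\<Sum>i<n. \<Sum>t<n. A $$ (i, t) * B $$ (t, i))"
    by (rule expand[OF assms])
  also have "\<dots> = (\<Sum>t<n. \<Sum>i<n. A $$ (i, t) * B $$ (t, i))"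
    by (rule sum.swap)
  also have "\<dots> = trace (B * A)"
    using assms by (simp add: expand mult.commute)
  finally show ?thesis .
qed

lemma trace_smult: "A \<in> carrier_mat n n \<Longrightarrow> trace (c \<cdot>\<^sub>m A) = c * trace A"
  unfolding trace_def by (simp add: sum_distrib_left)

lemma trace_mult_smult:
  "A \<in> carrier_mat n n \<Longrightarrow> B \<in> carrier_mat n n \<Longrightarrow> trace (A * (c \<cdot>\<^sub>m B)) = c * trace (A * B)"
  by (simp add: mult_smult_distrib trace_smult[of _ n])

lemma trace_smult_mult:
  "A \<in> carrier_mat n n \<Longrightarrow> B \<in> carrier_mat n n \<Longrightarrow> trace ((c \<cdot>\<^sub>m A) * B) = c * trace (A * B)"
  by (simp add: mult_smult_assoc_mat trace_smult[of _ n])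

lemma trace_minus:
  "A \<in> carrier_mat n n \<Longrightarrow> B \<in> carrier_mat n n \<Longrightarrow> trace (A - B) = trace A - trace B"
  by (simp add: trace_def sum_subtractf)

lemma trace_ad_mult:
  assumes Z: "Z \<in> carrier_mat n n" and A: "A \<in> carrier_mat n n" and B: "B \<in> carrier_mat n n"
  shows "trace (ad Z A * B) = - trace (A * ad Z B)"
proof -
  have "ad Z A * B = Z * (A * B) - A * (Z * B)"
    using assms by (simp add: ad_def minus_mult_distrib_mat[of "Z * A" n n "A * Z" B n]
        assoc_mult_mat[of _ n n _ n _ n])
  moreover have "A * ad Z B = A * (Z * B) - (A * B) * Z"
    using assms by (simp add: ad_def mult_minus_distrib_mat[OF A, of "Z * B" n "B * Z"]
        assoc_mult_mat[of _ n n _ n _ n])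
  moreover have "trace (Z * (A * B)) = trace ((A * B) * Z)"
    using assms by (intro trace_mult_comm) auto
  moreover have "Z * (A * B) \<in> carrier_mat n n" "A * (Z * B) \<in> carrier_mat n n"
    "A * (B * Z) \<in> carrier_mat n n"
    using assms by (auto intro!: mult_carrier_mat)
  ultimately show ?thesis using assms by (simp add: trace_minus[of _ n])
qed

lemma trace_ad_pow_mult:
  assumes "Z \<in> carrier_mat n n" "A \<in> carrier_mat n n" "B \<in> carrier_mat n n"
  shows "trace ((ad Z ^^ m) A * B) = (-1) ^ m * trace (A * (ad Z ^^ m) B)"
  using assms(3)
proof (induction m arbitrary: B)
  case (Suc m)
  have "trace ((ad Z ^^ Suc m) A * B) = - trace ((ad Z ^^ m) A * ad Z B)"
    using assms Suc.prems by (simp add: trace_ad_mult)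
  also have "\<dots> = - ((-1) ^ m * trace (A * (ad Z ^^ m) (ad Z B)))"
    using assms Suc by simp
  also have "(ad Z ^^ m) (ad Z B) = (ad Z ^^ Suc m) B"
    by (simp only: funpow_Suc_right o_def)
  finally show ?case by (simp del: funpow.simps)
qed simp

lemma trace_ad_pow_mult_pow_self:
  assumes "Z \<in> carrier_mat n n" "A \<in> carrier_mat n n" "0 < d"
  shows "trace ((ad Z ^^ d) A * Z ^\<^sub>m k) = 0"
proof -
  obtain d' where "d = Suc d'" using assms(3) by (cases d) auto
  then have "(ad Z ^^ d) (Z ^\<^sub>m k) = (ad Z ^^ d') (0\<^sub>m n n)"
    using assms by (simp add: funpow_Suc_right ad_pow_mat_self del: funpow.simps)
  then have "(ad Z ^^ d) (Z ^\<^sub>m k) = 0\<^sub>m n n"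
    using assms by (simp add: ad_pow_zero)
  moreover have "trace ((ad Z ^^ d) A * Z ^\<^sub>m k) = (-1) ^ d * trace (A * (ad Z ^^ d) (Z ^\<^sub>m k))"
    using assms by (intro trace_ad_pow_mult) auto
  ultimately show ?thesis
    using assms by (simp add: trace_def index_mult_mat_sum)
qed

lemma sum_lessThan_if_less:
  "m \<le> n \<Longrightarrow> (\<Sum>i<n. if i < m then f i else 0) = (\<Sum>i<(m::nat). f i)"
proof -
  assume "m \<le> n"
  then have "(\<Sum>i<n. if i < m then f i else 0) = (\<Sum>i<m. if i < m then f i else 0)"
    by (intro sum.mono_neutral_right) auto
  then show ?thesis by simp
qed

lemma sum_lower_triangle_swap:
  "(\<Sum>k<(n::nat). \<Sum>l=1..k. g k l) = (\<Sum>l\<in>{1..<n}. \<Sum>k\<in>{l..<n}. g k l)"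
proof -
  have "(\<Sum>k<n. \<Sum>l=1..k. g k l) = (\<Sum>k<n. \<Sum>l\<in>{l \<in> {1..<n}. l \<le> k}. g k l)"
    by (intro sum.cong) auto
  also have "\<dots> = (\<Sum>l\<in>{1..<n}. \<Sum>k\<in>{k \<in> {..<n}. l \<le> k}. g k l)"
    by (rule sum.swap_restrict) auto
  also have "\<dots> = (\<Sum>l\<in>{1..<n}. \<Sum>k\<in>{l..<n}. g k l)"
    by (intro sum.cong) auto
  finally show ?thesis .
qed

lemma sum_odd_numbers: "(\<Sum>k<n. 2 * real k + 1) = (real n)^2"
  by (induction n) (auto simp: power2_eq_square algebra_simps)

lemma sum_choose_upper_convolution:
  "(\<Sum>a\<le>m. ((a + p) choose p) * ((m - a + q) choose q)) = (m + p + q + 1) choose m"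
proof (induction m arbitrary: q)
  case 0
  then show ?case by simp
next
  case (Suc m)
  note outer_IH = Suc.IH
  show ?case
  proof (induction q)
    case 0
    have "(\<Sum>a\<le>Suc m. ((a + p) choose p) * ((Suc m - a + 0) choose 0)) =
        (\<Sum>a\<le>Suc m. (p + a) choose p)"
      by (simp add: add.commute)
    also have "\<dots> = (p + Suc m + 1) choose Suc m"
      by (rule choose_rising_sum(2))
    finally show ?case by (simp add: add_ac)
  next
    case (Suc q)
    have pascal: "(Suc m - a + Suc q) choose Suc q =
        ((Suc m - a + q) choose q) + (if a \<le> m then (m - a + Suc q) choose Suc q else 0)"
      if "a \<le> Suc m" for a
      using that by (cases "a \<le> m") (auto simp: Suc_diff_le)
    let ?A = "\<lambda>a. ((a + p) choose p) * ((Suc m - a + q) choose q)"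
    let ?B = "\<lambda>a. ((a + p) choose p) * ((m - a + Suc q) choose Suc q)"
    have "(\<Sum>a\<le>Suc m. ((a + p) choose p) * ((Suc m - a + Suc q) choose Suc q)) =
        (\<Sum>a\<le>Suc m. ?A a + (if a \<le> m then ?B a else 0))"
    proof (rule sum.cong)
      fix a assume "a \<in> {..Suc m}"
      then have "a \<le> Suc m" by simp
      then show "((a + p) choose p) * ((Suc m - a + Suc q) choose Suc q) =
          ?A a + (if a \<le> m then ?B a else 0)"
        unfolding pascal[OF \<open>a \<le> Suc m\<close>] by (simp add: algebra_simps)
    qed simp
    also have "\<dots> = (\<Sum>a\<le>Suc m. ?A a) + (\<Sum>a\<le>m. ?B a)"
      by (simp add: sum.distrib atMost_Suc[of m])
    finally show ?case using Suc.IH outer_IH[of "Suc q"] by simp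
  qed
qed

lemma orthogonal_rows_imp_orthogonal_columns:
  fixes v :: "nat \<Rightarrow> nat \<Rightarrow> 'a::field" and c d :: "nat \<Rightarrow> 'a"
  assumes c: "\<And>r. r < N \<Longrightarrow> c r \<noteq> 0"
    and orth: "\<And>r r'. r < N \<Longrightarrow> r' < N \<Longrightarrow>
      (\<Sum>a<N. v r a * v r' a * d a) = (if r = r' then c r else 0)"
    and a: "a < N"
  shows "d a * (\<Sum>r<N. (v r a)^2 / c r) = 1"
proof -
  define V where "V = mat N N (\<lambda>(r, a). v r a)"
  define W where "W = mat N N (\<lambda>(a, r). v r a * d a / c r)"
  have V: "V \<in> carrier_mat N N" and W: "W \<in> carrier_mat N N"
    by (auto simp: V_def W_def)
  have "V * W = 1\<^sub>m N"
  proof (rule eq_matI)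
    fix r r' assume "r < dim_row (1\<^sub>m N :: 'a mat)" "r' < dim_col (1\<^sub>m N :: 'a mat)"
    then have r: "r < N" and r': "r' < N" by auto
    have "(V * W) $$ (r, r') = (\<Sum>a<N. v r a * v r' a * d a) / c r'"
      using r r' V W
      by (simp add: index_mult_mat_sum sum_divide_distrib V_def W_def algebra_simps)
    then show "(V * W) $$ (r, r') = 1\<^sub>m N $$ (r, r')"
      using r r' orth[OF r r'] c[OF r'] by simp
  qed (auto simp: V_def W_def)
  then have "W * V = 1\<^sub>m N" by (rule mat_mult_left_right_inverse[OF V W])
  moreover have "(W * V) $$ (a, a) = d a * (\<Sum>r<N. (v r a)^2 / c r)"
    using a V W by (simp add: index_mult_mat_sum V_def W_def sum_distrib_left power2_eq_square
        algebra_simps)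
  ultimately show ?thesis using a by simp
qed

lemma poly_interpolation_exists:
  fixes z y :: "nat \<Rightarrow> 'a::field"
  assumes "inj_on z {..N}"
  shows "\<exists>p. degree p \<le> N \<and> (\<forall>a\<le>N. poly p (z a) = y a)"
  using assms
proof (induction N)
  case 0
  show ?case by (rule exI[of _ "[:y 0:]"]) auto
next
  case (Suc N)
  then obtain p where p: "degree p \<le> N" "\<forall>a\<le>N. poly p (z a) = y a"
    by (meson atMost_subset_iff inj_on_subset le_SucI order_refl)
  \<comment> \<open>Newton step: correct \<open>p\<close> by a multiple of the node polynomial \<open>q\<close>.\<close>
  define q where "q = (\<Prod>b\<le>N. [:- z b, 1:])"
  have poly_q: "poly q x = (\<Prod>b\<le>N. x - z b)" for x
    unfolding q_def by (simp add: poly_prod)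
  have "degree q \<le> Suc N"
    unfolding q_def using degree_prod_sum_le[of "{..N}" "\<lambda>b. [:- z b, 1:]"] by simp
  have "poly q (z (Suc N)) \<noteq> 0"
    using Suc.prems unfolding poly_q by (auto dest: inj_onD)
  define p' where "p' = p + smult ((y (Suc N) - poly p (z (Suc N))) / poly q (z (Suc N))) q"
  have "degree p' \<le> Suc N"
    unfolding p'_def using p(1) \<open>degree q \<le> Suc N\<close>
    by (meson degree_add_le degree_smult_le le_SucI order_trans)
  moreover have "poly p' (z a) = y a" if "a \<le> Suc N" for a
  proof (cases "a = Suc N")
    case True
    then show ?thesis using \<open>poly q (z (Suc N)) \<noteq> 0\<close> by (simp add: p'_def)
  next
    case False
    with that have "a \<le> N" by simp
    then show ?thesis using p(2) by (auto simp: p'_def poly_q)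
  qed
  ultimately show ?case by blast
qed

section \<open>The principal sl(2)-triple\<close>

definition xcoeff :: "nat \<Rightarrow> nat \<Rightarrow> real" where
  "xcoeff n r = real (r + 1) * real (n - (r + 1))"

definition xcoeff_prod :: "nat \<Rightarrow> nat \<Rightarrow> nat \<Rightarrow> real" where
  "xcoeff_prod n a k = (\<Prod>r\<in>{a..<a + k}. xcoeff n r)"

lemma xcoeff_prod_0 [simp]: "xcoeff_prod n a 0 = 1"
  by (simp add: xcoeff_prod_def)

lemma xcoeff_prod_Suc: "xcoeff_prod n a (Suc k) = xcoeff_prod n a k * xcoeff n (a + k)"
  by (simp add: xcoeff_prod_def)

lemma xcoeff_prod_Suc_left: "xcoeff_prod n a (Suc k) = xcoeff n a * xcoeff_prod n (Suc a) k"
  unfolding xcoeff_prod_def by (subst prod.atLeast_Suc_lessThan) auto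

lemma xcoeff_prod_add: "xcoeff_prod n a (k + l) = xcoeff_prod n a k * xcoeff_prod n (a + k) l"
  by (induction l) (auto simp: xcoeff_prod_Suc add.assoc)

lemma xcoeff_nonzero: "r + 1 < n \<Longrightarrow> xcoeff n r \<noteq> 0"
  by (simp add: xcoeff_def)

lemma xcoeff_prod_nonzero: "a + k < n \<Longrightarrow> xcoeff_prod n a k \<noteq> 0"
  by (auto simp: xcoeff_prod_def xcoeff_def)

lemma sl2_carrier [simp]:
  "Xmat n \<in> carrier_mat n n" "Ymat n \<in> carrier_mat n n" "Hmat n \<in> carrier_mat n n"
  by (auto simp: Xmat_def Ymat_def Hmat_def)

lemma sl2_dim [simp]:
  "dim_row (Xmat n) = n" "dim_col (Xmat n) = n" "dim_row (Ymat n) = n" "dim_col (Ymat n) = n"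
  "dim_row (Hmat n) = n" "dim_col (Hmat n) = n"
  by (auto simp: Xmat_def Ymat_def Hmat_def)

lemma Xmat_index:
  "i < n \<Longrightarrow> j < n \<Longrightarrow> Xmat n $$ (i, j) = (if j = i + 1 then xcoeff n i else 0)"
  by (simp add: Xmat_def xcoeff_def)

lemma Ymat_index: "i < n \<Longrightarrow> j < n \<Longrightarrow> Ymat n $$ (i, j) = (if i = j + 1 then 1 else 0)"
  by (simp add: Ymat_def)

lemma Hmat_index: "i < n \<Longrightarrow> j < n \<Longrightarrow> Hmat n $$ (i, j) = (if i = j then alpha n (i + 1) else 0)"
  by (simp add: Hmat_def alpha_def)

lemma Ymat_mult_index:
  assumes "A \<in> carrier_mat n n" "i < n" "j < n"
  shows "(Ymat n * A) $$ (i, j) = (if i = 0 then 0 else A $$ (i - 1, j))"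
proof -
  have "(Ymat n * A) $$ (i, j) = (\<Sum>t<n. Ymat n $$ (i, t) * A $$ (t, j))"
    using assms by (simp add: index_mult_mat_sum)
  also have "\<dots> = (\<Sum>t<n. if t = i - 1 \<and> i \<noteq> 0 then A $$ (t, j) else 0)"
    by (rule sum.cong) (use assms in \<open>auto simp: Ymat_index\<close>)
  finally show ?thesis using assms by simp
qed

lemma mult_Ymat_index:
  assumes "A \<in> carrier_mat n n" "i < n" "j < n"
  shows "(A * Ymat n) $$ (i, j) = (if j + 1 < n then A $$ (i, j + 1) else 0)"
proof -
  have "(A * Ymat n) $$ (i, j) = (\<Sum>t<n. A $$ (i, t) * Ymat n $$ (t, j))"
    using assms by (simp add: index_mult_mat_sum)
  also have "\<dots> = (\<Sum>t<n. if t = j + 1 then A $$ (i, t) else 0)"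
    by (rule sum.cong) (use assms in \<open>auto simp: Ymat_index\<close>)
  finally show ?thesis by simp
qed

lemma Xmat_mult_index:
  assumes "A \<in> carrier_mat n n" "i < n" "j < n"
  shows "(Xmat n * A) $$ (i, j) = (if i + 1 < n then xcoeff n i * A $$ (i + 1, j) else 0)"
proof -
  have "(Xmat n * A) $$ (i, j) = (\<Sum>t<n. Xmat n $$ (i, t) * A $$ (t, j))"
    using assms by (simp add: index_mult_mat_sum)
  also have "\<dots> = (\<Sum>t<n. if t = i + 1 then xcoeff n i * A $$ (t, j) else 0)"
    by (rule sum.cong) (use assms in \<open>auto simp: Xmat_index\<close>)
  finally show ?thesis by simp
qed

lemma mult_Xmat_index:
  assumes "A \<in> carrier_mat n n" "i < n" "j < n"
  shows "(A * Xmat n) $$ (i, j) = (if j = 0 then 0 else A $$ (i, j - 1) * xcoeff n (j - 1))"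
proof -
  have "(A * Xmat n) $$ (i, j) = (\<Sum>t<n. A $$ (i, t) * Xmat n $$ (t, j))"
    using assms by (simp add: index_mult_mat_sum)
  also have "\<dots> = (\<Sum>t<n. if t = j - 1 \<and> j \<noteq> 0 then A $$ (i, t) * xcoeff n t else 0)"
    by (rule sum.cong) (use assms in \<open>auto simp: Xmat_index\<close>)
  finally show ?thesis using assms by simp
qed

lemma Hmat_mult_index:
  assumes "A \<in> carrier_mat n n" "i < n" "j < n"
  shows "(Hmat n * A) $$ (i, j) = alpha n (i + 1) * A $$ (i, j)"
proof -
  have "(Hmat n * A) $$ (i, j) = (\<Sum>t<n. Hmat n $$ (i, t) * A $$ (t, j))"
    using assms by (simp add: index_mult_mat_sum)
  also have "\<dots> = (\<Sum>t<n. if t = i then alpha n (i + 1) * A $$ (t, j) else 0)"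
    by (rule sum.cong) (use assms in \<open>auto simp: Hmat_index\<close>)
  finally show ?thesis using assms by simp
qed

lemma mult_Hmat_index:
  assumes "A \<in> carrier_mat n n" "i < n" "j < n"
  shows "(A * Hmat n) $$ (i, j) = A $$ (i, j) * alpha n (j + 1)"
proof -
  have "(A * Hmat n) $$ (i, j) = (\<Sum>t<n. A $$ (i, t) * Hmat n $$ (t, j))"
    using assms by (simp add: index_mult_mat_sum)
  also have "\<dots> = (\<Sum>t<n. if t = j then A $$ (i, t) * alpha n (j + 1) else 0)"
    by (rule sum.cong) (use assms in \<open>auto simp: Hmat_index\<close>)
  finally show ?thesis using assms by simp
qed

lemma ad_Ymat_index:
  assumes "A \<in> carrier_mat n n" "i < n" "j < n"
  shows "ad (Ymat n) A $$ (i, j) =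
    (if i = 0 then 0 else A $$ (i - 1, j)) - (if j + 1 < n then A $$ (i, j + 1) else 0)"
  using assms by (simp add: ad_def Ymat_mult_index mult_Ymat_index)

lemma ad_Xmat_index:
  assumes "A \<in> carrier_mat n n" "i < n" "j < n"
  shows "ad (Xmat n) A $$ (i, j) = (if i + 1 < n then xcoeff n i * A $$ (i + 1, j) else 0)
    - (if j = 0 then 0 else A $$ (i, j - 1) * xcoeff n (j - 1))"
  using assms by (simp add: ad_def Xmat_mult_index mult_Xmat_index)

lemma ad_Hmat_index:
  assumes "A \<in> carrier_mat n n" "i < n" "j < n"
  shows "ad (Hmat n) A $$ (i, j) = (alpha n (i + 1) - alpha n (j + 1)) * A $$ (i, j)"
  using assms by (simp add: ad_def Hmat_mult_index mult_Hmat_index algebra_simps)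

(* The diagonal of [X, Y] = H. *)
lemma alpha_eq_xcoeff_diff:
  "i < n \<Longrightarrow>
    alpha n (Suc i) = (if i + 1 < n then xcoeff n i else 0) - (if i = 0 then 0 else xcoeff n (i - 1))"
proof (cases "i + 1 < n")
  case True
  then show ?thesis by (cases i) (auto simp: xcoeff_def alpha_def of_nat_diff algebra_simps)
next
  case False
  moreover assume "i < n"
  ultimately have "n = i + 1" by simp
  then show ?thesis by (cases i) (auto simp: xcoeff_def alpha_def algebra_simps)
qed

lemma ad_Xmat_ad_Ymat:
  assumes A: "A \<in> carrier_mat n n"
  shows "ad (Xmat n) (ad (Ymat n) A) = ad (Ymat n) (ad (Xmat n) A) + ad (Hmat n) A"
proof (rule eq_matI)
  fix i j
  assume "i < dim_row (ad (Ymat n) (ad (Xmat n) A) + ad (Hmat n) A)"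
    and "j < dim_col (ad (Ymat n) (ad (Xmat n) A) + ad (Hmat n) A)"
  then have i: "i < n" and j: "j < n" using A by auto
  show "ad (Xmat n) (ad (Ymat n) A) $$ (i, j) =
      (ad (Ymat n) (ad (Xmat n) A) + ad (Hmat n) A) $$ (i, j)"
    using A i j
    by (cases "i + 1 < n"; cases "j = 0"; cases "i = 0"; cases "j + 1 < n")
      (simp_all add: ad_Xmat_index ad_Ymat_index ad_Hmat_index alpha_eq_xcoeff_diff[OF i]
        alpha_eq_xcoeff_diff[OF j] alpha_eq_xcoeff_diff[of 0 n] algebra_simps)
qed (use A in auto)

lemma ad_Hmat_ad_Ymat:
  assumes A: "A \<in> carrier_mat n n"
  shows "ad (Hmat n) (ad (Ymat n) A) = ad (Ymat n) (ad (Hmat n) A) - 2 \<cdot>\<^sub>m ad (Ymat n) A"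
proof (rule eq_matI)
  fix i j
  assume "i < dim_row (ad (Ymat n) (ad (Hmat n) A) - 2 \<cdot>\<^sub>m ad (Ymat n) A)"
    and "j < dim_col (ad (Ymat n) (ad (Hmat n) A) - 2 \<cdot>\<^sub>m ad (Ymat n) A)"
  then have i: "i < n" and j: "j < n" using A by auto
  show "ad (Hmat n) (ad (Ymat n) A) $$ (i, j) =
      (ad (Ymat n) (ad (Hmat n) A) - 2 \<cdot>\<^sub>m ad (Ymat n) A) $$ (i, j)"
    using A i j by (cases "i = 0"; cases "j + 1 < n")
      (simp_all add: ad_Ymat_index ad_Hmat_index alpha_def of_nat_diff algebra_simps)
qed (use A in auto)

lemma Xpow_index:
  assumes "i < n" "j < n"
  shows "(Xmat n ^\<^sub>m k) $$ (i, j) = (if j = i + k then xcoeff_prod n i k else 0)"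
  using assms(2)
proof (induction k arbitrary: j)
  case (Suc k)
  have "(Xmat n ^\<^sub>m Suc k) $$ (i, j) =
      (if j = 0 then 0 else (Xmat n ^\<^sub>m k) $$ (i, j - 1) * xcoeff n (j - 1))"
    using assms Suc.prems by (simp add: mult_Xmat_index)
  then show ?case using Suc by (auto simp: xcoeff_prod_Suc)
qed (use assms in \<open>simp add: Xmat_def\<close>)

lemma Ypow_index:
  assumes "i < n" "j < n"
  shows "(Ymat n ^\<^sub>m k) $$ (i, j) = (if i = j + k then 1 else 0)"
  using assms(2)
proof (induction k arbitrary: j)
  case (Suc k)
  have "(Ymat n ^\<^sub>m Suc k) $$ (i, j) = (if j + 1 < n then (Ymat n ^\<^sub>m k) $$ (i, j + 1) else 0)"
    using assms Suc.prems by (simp add: mult_Ymat_index)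
  then show ?case using Suc assms by auto
qed (use assms in \<open>simp add: Ymat_def\<close>)

lemma ad_Hmat_Xpow: "ad (Hmat n) (Xmat n ^\<^sub>m k) = (2 * real k) \<cdot>\<^sub>m Xmat n ^\<^sub>m k"
  by (rule eq_matI) (auto simp: ad_Hmat_index Xpow_index alpha_def split: if_splits)

lemma ad_Hmat_lowered:
  "ad (Hmat n) ((ad (Ymat n) ^^ m) (Xmat n ^\<^sub>m k)) =
    (2 * real k - 2 * real m) \<cdot>\<^sub>m (ad (Ymat n) ^^ m) (Xmat n ^\<^sub>m k)"
proof (induction m)
  case 0
  show ?case by (simp add: ad_Hmat_Xpow)
next
  case (Suc m)
  let ?B = "(ad (Ymat n) ^^ m) (Xmat n ^\<^sub>m k)"
  have B: "?B \<in> carrier_mat n n" by simp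
  have "ad (Hmat n) (ad (Ymat n) ?B) = ad (Ymat n) (ad (Hmat n) ?B) - 2 \<cdot>\<^sub>m ad (Ymat n) ?B"
    by (rule ad_Hmat_ad_Ymat[OF B])
  also have "\<dots> = (2 * real k - 2 * real m) \<cdot>\<^sub>m ad (Ymat n) ?B - 2 \<cdot>\<^sub>m ad (Ymat n) ?B"
    by (simp add: Suc.IH ad_smult[OF _ B])
  also have "\<dots> = (2 * real k - 2 * real (Suc m)) \<cdot>\<^sub>m ad (Ymat n) ?B"
    by (rule eq_matI) (auto simp: algebra_simps)
  finally show ?case by simp
qed

lemma ad_Xmat_lowered:
  "ad (Xmat n) ((ad (Ymat n) ^^ Suc m) (Xmat n ^\<^sub>m k)) =
    (real (Suc m) * (2 * real k - real m)) \<cdot>\<^sub>m (ad (Ymat n) ^^ m) (Xmat n ^\<^sub>m k)"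
proof (induction m)
  case 0
  have "ad (Xmat n) (ad (Ymat n) (Xmat n ^\<^sub>m k)) =
      ad (Ymat n) (ad (Xmat n) (Xmat n ^\<^sub>m k)) + ad (Hmat n) (Xmat n ^\<^sub>m k)"
    by (rule ad_Xmat_ad_Ymat) simp
  then show ?case by (simp add: ad_pow_mat_self[OF sl2_carrier(1)] ad_zero ad_Hmat_Xpow)
next
  case (Suc m)
  let ?B = "(ad (Ymat n) ^^ Suc m) (Xmat n ^\<^sub>m k)"
  let ?C = "(ad (Ymat n) ^^ m) (Xmat n ^\<^sub>m k)"
  have B: "?B \<in> carrier_mat n n" and C: "?C \<in> carrier_mat n n" by simp_all
  have "ad (Xmat n) (ad (Ymat n) ?B) = ad (Ymat n) (ad (Xmat n) ?B) + ad (Hmat n) ?B"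
    by (rule ad_Xmat_ad_Ymat[OF B])
  also have "\<dots> = (real (Suc m) * (2 * real k - real m)) \<cdot>\<^sub>m ad (Ymat n) ?C
      + (2 * real k - 2 * real (Suc m)) \<cdot>\<^sub>m ?B"
    by (simp only: Suc.IH ad_smult[OF _ C] ad_Hmat_lowered sl2_carrier)
  also have "\<dots> = (real (Suc (Suc m)) * (2 * real k - real (Suc m))) \<cdot>\<^sub>m ?B"
    by (rule eq_matI) (auto simp: algebra_simps)
  finally show ?case by simp
qed

lemma ad_Xmat_pow_lowered:
  "(ad (Xmat n) ^^ p) ((ad (Ymat n) ^^ (m + p)) (Xmat n ^\<^sub>m k)) =
    (\<Prod>t\<in>{m + 1..m + p}. real t * (2 * real k + 1 - real t)) \<cdot>\<^sub>m
      (ad (Ymat n) ^^ m) (Xmat n ^\<^sub>m k)"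
proof (induction p arbitrary: m)
  case 0
  show ?case by (rule eq_matI) auto
next
  case (Suc p)
  let ?f = "\<lambda>t. real t * (2 * real k + 1 - real t)"
  let ?P = "\<Prod>t\<in>{Suc m + 1..Suc m + p}. ?f t"
  let ?B = "(ad (Ymat n) ^^ Suc m) (Xmat n ^\<^sub>m k)"
  have B: "?B \<in> carrier_mat n n" by simp
  have "ad (Xmat n) ?B = ?f (Suc m) \<cdot>\<^sub>m (ad (Ymat n) ^^ m) (Xmat n ^\<^sub>m k)"
    using ad_Xmat_lowered[of n m k] by simp
  have "(ad (Xmat n) ^^ Suc p) ((ad (Ymat n) ^^ (m + Suc p)) (Xmat n ^\<^sub>m k)) =
      ad (Xmat n) (?P \<cdot>\<^sub>m ?B)"
    using Suc.IH[of "Suc m"] by simp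
  also have "\<dots> = ?P \<cdot>\<^sub>m (?f (Suc m) \<cdot>\<^sub>m (ad (Ymat n) ^^ m) (Xmat n ^\<^sub>m k))"
    by (simp only: ad_smult[OF sl2_carrier(1) B] \<open>ad (Xmat n) ?B = _\<close>)
  also have "\<dots> = (?P * ?f (Suc m)) \<cdot>\<^sub>m (ad (Ymat n) ^^ m) (Xmat n ^\<^sub>m k)"
    by (rule smult_smult_mat)
  also have "?P * ?f (Suc m) = (\<Prod>t\<in>{m + 1..m + Suc p}. ?f t)"
    by (subst (2) prod.atLeast_Suc_atMost) (auto simp: mult.commute)
  finally show ?case .
qed

lemma ad_Xmat_pow_lowered_eq_0:
  assumes "m < p"
  shows "(ad (Xmat n) ^^ p) ((ad (Ymat n) ^^ m) (Xmat n ^\<^sub>m k)) = 0\<^sub>m n n"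
proof -
  have "(ad (Xmat n) ^^ m) ((ad (Ymat n) ^^ m) (Xmat n ^\<^sub>m k)) =
      (\<Prod>t\<in>{1..m}. real t * (2 * real k + 1 - real t)) \<cdot>\<^sub>m Xmat n ^\<^sub>m k"
    using ad_Xmat_pow_lowered[where p = m and m = 0] by simp
  then have "(ad (Xmat n) ^^ Suc m) ((ad (Ymat n) ^^ m) (Xmat n ^\<^sub>m k)) = 0\<^sub>m n n"
    by (simp add: ad_smult[of "Xmat n" n] ad_pow_mat_self[OF sl2_carrier(1)])
  moreover have "p = (p - Suc m) + Suc m" using assms by simp
  ultimately show ?thesis by (metis ad_pow_zero comp_apply funpow_add sl2_carrier(1))
qed

lemma lowered_index_nonzero_imp:
  assumes "i < n" "j < n" "(ad (Ymat n) ^^ m) (Xmat n ^\<^sub>m k) $$ (i, j) \<noteq> 0"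
  shows "j + m = i + k"
  using assms
proof (induction m arbitrary: i j)
  case 0
  then show ?case by (simp add: Xpow_index split: if_splits)
next
  case (Suc m)
  then have "(0 < i \<and> (ad (Ymat n) ^^ m) (Xmat n ^\<^sub>m k) $$ (i - 1, j) \<noteq> 0) \<or>
      (j + 1 < n \<and> (ad (Ymat n) ^^ m) (Xmat n ^\<^sub>m k) $$ (i, j + 1) \<noteq> 0)"
    by (auto simp: ad_Ymat_index split: if_splits)
  then show ?case
    using Suc.IH[of "i - 1" j] Suc.IH[of i "j + 1"] Suc.prems by auto
qed

section \<open>An anti-automorphism exchanging X and Y\<close>

definition twisted_transpose :: "nat \<Rightarrow> real mat \<Rightarrow> real mat" where
  "twisted_transpose n A =
    mat n n (\<lambda>(i, j). xcoeff_prod n 0 j / xcoeff_prod n 0 i * A $$ (j, i))"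

lemma twisted_transpose_carrier [simp]: "twisted_transpose n A \<in> carrier_mat n n"
  by (simp add: twisted_transpose_def)

lemma twisted_transpose_dim [simp]:
  "dim_row (twisted_transpose n A) = n" "dim_col (twisted_transpose n A) = n"
  by (simp_all add: twisted_transpose_def)

lemma twisted_transpose_index:
  "i < n \<Longrightarrow> j < n \<Longrightarrow>
    twisted_transpose n A $$ (i, j) = xcoeff_prod n 0 j / xcoeff_prod n 0 i * A $$ (j, i)"
  by (simp add: twisted_transpose_def)

lemma twisted_transpose_mult:
  assumes A: "A \<in> carrier_mat n n" and B: "B \<in> carrier_mat n n"
  shows "twisted_transpose n (A * B) = twisted_transpose n B * twisted_transpose n A"
proof (rule eq_matI)
  fix i j
  assume "i < dim_row (twisted_transpose n B * twisted_transpose n A)"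
    and "j < dim_col (twisted_transpose n B * twisted_transpose n A)"
  then have i: "i < n" and j: "j < n" by auto
  let ?w = "xcoeff_prod n 0"
  have w: "?w t \<noteq> 0" if "t < n" for t
    using that by (simp add: xcoeff_prod_nonzero)
  have "twisted_transpose n (A * B) $$ (i, j) = (\<Sum>t<n. ?w j / ?w i * (A $$ (j, t) * B $$ (t, i)))"
    using A B i j by (simp add: twisted_transpose_index index_mult_mat_sum sum_distrib_left)
  also have "\<dots> = (\<Sum>t<n. (?w t / ?w i * B $$ (t, i)) * (?w j / ?w t * A $$ (j, t)))"
    by (rule sum.cong) (use w in \<open>auto simp: field_simps\<close>)
  also have "\<dots> = (twisted_transpose n B * twisted_transpose n A) $$ (i, j)"
    using i j by (simp add: twisted_transpose_index index_mult_mat_sum)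
  finally show "twisted_transpose n (A * B) $$ (i, j) =
      (twisted_transpose n B * twisted_transpose n A) $$ (i, j)" .
qed auto

lemma twisted_transpose_minus:
  "A \<in> carrier_mat n n \<Longrightarrow> B \<in> carrier_mat n n \<Longrightarrow>
    twisted_transpose n (A - B) = twisted_transpose n A - twisted_transpose n B"
  by (rule eq_matI) (auto simp: twisted_transpose_index algebra_simps)

lemma twisted_transpose_one: "twisted_transpose n (1\<^sub>m n) = 1\<^sub>m n"
  by (rule eq_matI) (auto simp: twisted_transpose_index xcoeff_prod_nonzero)

lemma twisted_transpose_Xmat: "twisted_transpose n (Xmat n) = Ymat n"
proof (rule eq_matI)
  fix i j assume "i < dim_row (Ymat n)" "j < dim_col (Ymat n)"
  then have i: "i < n" and j: "j < n" by auto
  show "twisted_transpose n (Xmat n) $$ (i, j) = Ymat n $$ (i, j)"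
  proof (cases "i = j + 1")
    case True
    then have "xcoeff_prod n 0 i = xcoeff_prod n 0 j * xcoeff n j"
      by (simp add: xcoeff_prod_Suc)
    moreover have "xcoeff_prod n 0 i \<noteq> 0" using i by (simp add: xcoeff_prod_nonzero)
    moreover have "xcoeff n j \<noteq> 0" using True i by (intro xcoeff_nonzero) simp
    ultimately show ?thesis using i j True by (simp add: twisted_transpose_index Xmat_index Ymat_index)
  qed (use i j in \<open>simp add: twisted_transpose_index Xmat_index Ymat_index\<close>)
qed auto

lemma twisted_transpose_Ymat: "twisted_transpose n (Ymat n) = Xmat n"
proof (rule eq_matI)
  fix i j assume "i < dim_row (Xmat n)" "j < dim_col (Xmat n)"
  then have i: "i < n" and j: "j < n" by auto
  show "twisted_transpose n (Ymat n) $$ (i, j) = Xmat n $$ (i, j)"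
  proof (cases "j = i + 1")
    case True
    then have "xcoeff_prod n 0 j = xcoeff_prod n 0 i * xcoeff n i" "xcoeff_prod n 0 i \<noteq> 0"
      using j by (simp_all add: xcoeff_prod_Suc xcoeff_prod_nonzero)
    then show ?thesis using i j True by (simp add: twisted_transpose_index Xmat_index Ymat_index)
  qed (use i j in \<open>simp add: twisted_transpose_index Xmat_index Ymat_index\<close>)
qed auto

lemma twisted_transpose_Xpow: "twisted_transpose n (Xmat n ^\<^sub>m k) = Ymat n ^\<^sub>m k"
proof (induction k)
  case (Suc k)
  have "twisted_transpose n (Xmat n ^\<^sub>m Suc k) = Ymat n * Ymat n ^\<^sub>m k"
    by (simp add: twisted_transpose_mult[of _ n] twisted_transpose_Xmat Suc)
  then show ?case by (simp add: pow_mat_commute[OF sl2_carrier(2)])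
qed (simp add: twisted_transpose_one)

lemma twisted_transpose_ad_Ymat:
  assumes "A \<in> carrier_mat n n"
  shows "twisted_transpose n (ad (Ymat n) A) = (-1) \<cdot>\<^sub>m ad (Xmat n) (twisted_transpose n A)"
proof -
  have "Ymat n * A \<in> carrier_mat n n" "A * Ymat n \<in> carrier_mat n n"
    using assms by (auto intro!: mult_carrier_mat)
  then have "twisted_transpose n (ad (Ymat n) A) =
      twisted_transpose n A * Xmat n - Xmat n * twisted_transpose n A"
    using assms by (simp add: ad_def twisted_transpose_minus[of "Ymat n * A" n "A * Ymat n"]
        twisted_transpose_mult[of "Ymat n" n A] twisted_transpose_mult[of A n "Ymat n"]
        twisted_transpose_Xmat twisted_transpose_Ymat)
  also have "\<dots> = (-1) \<cdot>\<^sub>m ad (Xmat n) (twisted_transpose n A)"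
    by (rule eq_matI) (auto simp: ad_def)
  finally show ?thesis .
qed

lemma twisted_transpose_lowered:
  "twisted_transpose n ((ad (Ymat n) ^^ m) (Xmat n ^\<^sub>m k)) =
    (-1) ^ m \<cdot>\<^sub>m (ad (Xmat n) ^^ m) (Ymat n ^\<^sub>m k)"
proof (induction m)
  case 0
  show ?case by (rule eq_matI) (auto simp: twisted_transpose_Xpow)
next
  case (Suc m)
  have "twisted_transpose n ((ad (Ymat n) ^^ Suc m) (Xmat n ^\<^sub>m k)) =
      (-1) \<cdot>\<^sub>m ad (Xmat n) ((-1) ^ m \<cdot>\<^sub>m (ad (Xmat n) ^^ m) (Ymat n ^\<^sub>m k))"
    by (simp add: twisted_transpose_ad_Ymat Suc.IH)
  also have "\<dots> = (-1) ^ Suc m \<cdot>\<^sub>m (ad (Xmat n) ^^ Suc m) (Ymat n ^\<^sub>m k)"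
    by (simp add: ad_smult[of "Xmat n" n] smult_smult_mat)
  finally show ?case .
qed

section \<open>The constants c_kl\<close>

lemma fact_mult_xcoeff_prod:
  "a + k < n \<Longrightarrow>
    fact a * fact (n - 1 - a - k) * xcoeff_prod n a k = (fact (a + k) * fact (n - 1 - a) :: real)"
proof (induction k)
  case (Suc k)
  have "fact a * fact (n - 1 - a - Suc k) * xcoeff_prod n a (Suc k) =
      real (a + k + 1) * (fact a * (real (n - 1 - a - k) * fact (n - 1 - a - Suc k)) * xcoeff_prod n a k)"
    by (simp add: xcoeff_prod_Suc xcoeff_def ac_simps)
  also have "real (n - 1 - a - k) * fact (n - 1 - a - Suc k) = (fact (n - 1 - a - k) :: real)"
    using Suc.prems fact_reduce[of "n - 1 - a - k", where 'a = real] by simp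
  also have "fact a * fact (n - 1 - a - k) * xcoeff_prod n a k = fact (a + k) * (fact (n - 1 - a) :: real)"
    using Suc by simp
  also have "real (a + k + 1) * (fact (a + k) * fact (n - 1 - a)) = (fact (a + Suc k) * fact (n - 1 - a) :: real)"
    by simp
  finally show ?case .
qed simp

lemma xcoeff_prod_eq_binomial:
  assumes "a + k < n"
  shows "xcoeff_prod n a k = (fact k)^2 * real (((a + k) choose k) * ((n - 1 - a) choose k))"
proof -
  have h1: "fact k * fact a * real ((a + k) choose k) = (fact (a + k) :: real)"
    using binomial_fact_lemma[of k "a + k", THEN arg_cong[where f = real]] by simp
  have h2: "fact k * fact (n - 1 - a - k) * real ((n - 1 - a) choose k) = (fact (n - 1 - a) :: real)"
    using binomial_fact_lemma[of k "n - 1 - a", THEN arg_cong[where f = real]] assms by simp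
  have "(fact k)^2 * real (((a + k) choose k) * ((n - 1 - a) choose k)) * (fact a * fact (n - 1 - a - k)) =
      (fact k * fact a * real ((a + k) choose k)) * (fact k * fact (n - 1 - a - k) * real ((n - 1 - a) choose k))"
    by (simp only: power2_eq_square of_nat_mult ac_simps)
  also have "\<dots> = xcoeff_prod n a k * (fact a * fact (n - 1 - a - k))"
    unfolding h1 h2 fact_mult_xcoeff_prod[OF assms, symmetric] by (simp only: ac_simps)
  finally show ?thesis by simp
qed

lemma sum_xcoeff_prod:
  assumes "k < n"
  shows "(\<Sum>a<n - k. xcoeff_prod n a k) = (fact k)^2 * real ((n + k) choose (2 * k + 1))"
proof -
  let ?m = "n - 1 - k"
  have "(\<Sum>a<n - k. xcoeff_prod n a k) =
      (fact k)^2 * real (\<Sum>a\<le>?m. ((a + k) choose k) * ((?m - a + k) choose k))"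
    unfolding of_nat_sum sum_distrib_left
    by (rule sum.cong) (use assms in \<open>auto simp: xcoeff_prod_eq_binomial\<close>)
  also have "(\<Sum>a\<le>?m. ((a + k) choose k) * ((?m - a + k) choose k)) = (n + k) choose ?m"
    using sum_choose_upper_convolution[where m = ?m and p = k and q = k] assms by simp
  also have "(n + k) choose ?m = (n + k) choose (2 * k + 1)"
    using binomial_symmetric[of ?m "n + k"] assms by (simp add: mult_2)
  finally show ?thesis .
qed

lemma fact_add_eq_fact_diff_mult:
  "k < n \<Longrightarrow>
    fact (n + k) = (fact (n - k - 1) :: real) * (real n * (\<Prod>j=1..k. (real n)^2 - (real j)^2))"
proof (induction k)
  case 0
  then show ?case by (cases n) auto
next
  case (Suc k)
  let ?P = "\<Prod>j=1..k. (real n)^2 - (real j)^2"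
  have "fact (n + Suc k) = real (n + k + 1) * (fact (n + k) :: real)"
    by simp
  also have "\<dots> = real (n + k + 1) * (fact (n - k - 1) * (real n * ?P))"
    using Suc by simp
  also have "fact (n - k - 1) = real (n - k - 1) * (fact (n - Suc k - 1) :: real)"
    using Suc.prems by (subst fact_reduce) auto
  also have "real (n + k + 1) * (real (n - k - 1) * fact (n - Suc k - 1) * (real n * ?P)) =
      fact (n - Suc k - 1) * (real n * (?P * (real (n - k - 1) * real (n + k + 1))))"
    by (simp only: ac_simps)
  also have "real (n - k - 1) * real (n + k + 1) = (real n)^2 - (real (Suc k))^2"
    using Suc.prems by (simp add: of_nat_diff power2_eq_square algebra_simps)
  finally show ?case by (simp add: prod.nat_ivl_Suc' mult.commute)
qed

lemma binomial_mult_fact_odd: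
  assumes "k < n"
  shows "real ((n + k) choose (2 * k + 1)) * fact (2 * k + 1) =
    real n * (\<Prod>j=1..k. (real n)^2 - (real j)^2)"
proof -
  have "fact (2 * k + 1) * fact (n - k - 1) * real ((n + k) choose (2 * k + 1)) = (fact (n + k) :: real)"
    using binomial_fact_lemma[of "2 * k + 1" "n + k", THEN arg_cong[where f = real]] assms
    by (simp add: Suc_diff_Suc del: fact_Suc)
  then have "fact (n - k - 1) * (real ((n + k) choose (2 * k + 1)) * fact (2 * k + 1)) =
      fact (n - k - 1) * (real n * (\<Prod>j=1..k. (real n)^2 - (real j)^2))"
    using fact_add_eq_fact_diff_mult[OF assms] by (simp only: ac_simps)
  then show ?thesis by simp
qed

lemma prod_lowering_coeffs_fact:
  "d \<le> 2 * k \<Longrightarrow>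
    (\<Prod>t=1..d. real t * (2 * real k + 1 - real t)) * fact (2 * k - d) = fact d * fact (2 * k)"
proof (induction d)
  case (Suc d)
  let ?P = "\<Prod>t=1..d. real t * (2 * real k + 1 - real t)"
  have "(\<Prod>t=1..Suc d. real t * (2 * real k + 1 - real t)) = real (Suc d) * real (2 * k - d) * ?P"
    using Suc.prems by (simp add: prod.nat_ivl_Suc' of_nat_diff)
  then have "(\<Prod>t=1..Suc d. real t * (2 * real k + 1 - real t)) * fact (2 * k - Suc d) =
      real (Suc d) * (?P * (real (2 * k - d) * fact (2 * k - Suc d)))"
    by (simp add: ac_simps)
  also have "real (2 * k - d) * fact (2 * k - Suc d) = (fact (2 * k - d) :: real)"
    using Suc.prems by (subst (2) fact_reduce) auto
  also have "real (Suc d) * (?P * fact (2 * k - d)) = real (Suc d) * (fact d * fact (2 * k))"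
    using Suc by simp
  finally show ?case by simp
qed simp

lemma ckl_eq_prod_mult_sum:
  assumes "l \<le> k" "k < n"
  shows "ckl n k l = (\<Prod>t=1..k - l. real t * (2 * real k + 1 - real t)) *
    (\<Sum>a<n - k. xcoeff_prod n a k)"
proof -
  define c where "c = 2 * real k + 1"
  have "c \<noteq> 0" unfolding c_def by linarith
  have "(\<Prod>t=1..k - l. real t * (2 * real k + 1 - real t)) * fact (k + l) = fact (k - l) * fact (2 * k)"
    using prod_lowering_coeffs_fact[of "k - l" k] assms by (simp add: Nat.diff_diff_right)
  then have P: "(\<Prod>t=1..k - l. real t * (2 * real k + 1 - real t)) =
      fact (k - l) * fact (2 * k) / fact (k + l)"
    by (simp add: field_simps)
  have "fact (2 * k + 1) = c * (fact (2 * k) :: real)"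
    by (simp add: c_def)
  then have C: "real ((n + k) choose (2 * k + 1)) =
      real n * (\<Prod>j=1..k. (real n)^2 - (real j)^2) / (c * fact (2 * k))"
    using binomial_mult_fact_odd[OF assms(2)] \<open>c \<noteq> 0\<close> by (simp add: field_simps)
  show ?thesis
    unfolding ckl_def sum_xcoeff_prod[OF assms(2)] P C unfolding c_def[symmetric]
    using \<open>c \<noteq> 0\<close>
    by (simp add: field_simps)
qed

lemma ckl_nonzero:
  assumes "k < n"
  shows "ckl n k l \<noteq> 0"
proof -
  have "(real n)^2 - (real j)^2 \<noteq> 0" if "j \<in> {1..k}" for j
  proof -
    have "(real j)^2 < (real n)^2" using that assms by (intro power_strict_mono) auto
    then show ?thesis by linarith
  qed
  then show ?thesis using assms by (simp add: ckl_def)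
qed

section \<open>Orthogonality of the matrices M_kl\<close>

definition Mkl :: "nat \<Rightarrow> nat \<Rightarrow> nat \<Rightarrow> real mat" where
  "Mkl n k l = (ad (Ymat n) ^^ (k - l)) (Xmat n ^\<^sub>m k)"

lemma Mkl_carrier [simp]: "Mkl n k l \<in> carrier_mat n n"
  by (simp add: Mkl_def)

lemma Mkl_dim [simp]: "dim_row (Mkl n k l) = n" "dim_col (Mkl n k l) = n"
  using Mkl_carrier by blast+

lemma Mkl_index_eq_0:
  assumes "l \<le> k" "i < n" "j < n" "j \<noteq> i + l"
  shows "Mkl n k l $$ (i, j) = 0"
proof (rule ccontr)
  assume "Mkl n k l $$ (i, j) \<noteq> 0"
  then have "j + (k - l) = i + k"
    using lowered_index_nonzero_imp[of i n j "k - l" k] assms unfolding Mkl_def by blast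
  with assms show False by arith
qed

lemma trace_Mkl_twisted_transpose_eq_sum:
  assumes "l \<le> k" "l \<le> k'"
  shows "trace (Mkl n k l * twisted_transpose n (Mkl n k' l)) =
    (\<Sum>a<n - l. Mkl n k l $$ (a, a + l) * Mkl n k' l $$ (a, a + l) / xcoeff_prod n a l)"
proof -
  let ?M = "Mkl n k l" and ?M' = "twisted_transpose n (Mkl n k' l)"
  have "(?M * ?M') $$ (i, i) =
      (if i < n - l then Mkl n k l $$ (i, i + l) * Mkl n k' l $$ (i, i + l) / xcoeff_prod n i l else 0)"
    if i: "i < n" for i
  proof -
    have "(?M * ?M') $$ (i, i) = (\<Sum>t<n. ?M $$ (i, t) * ?M' $$ (t, i))"
      using i by (simp add: index_mult_mat_sum)
    also have "\<dots> = (\<Sum>t<n. if t = i + l then ?M $$ (i, t) * ?M' $$ (t, i) else 0)"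
      by (rule sum.cong) (use i in \<open>auto simp: Mkl_index_eq_0[OF assms(1)]\<close>)
    also have "\<dots> = (if i + l < n then ?M $$ (i, i + l) * ?M' $$ (i + l, i) else 0)"
      by simp
    also have "\<dots> = (if i < n - l then Mkl n k l $$ (i, i + l) * Mkl n k' l $$ (i, i + l) /
        xcoeff_prod n i l else 0)"
    proof (cases "i + l < n")
      case True
      then have "xcoeff_prod n 0 (i + l) = xcoeff_prod n 0 i * xcoeff_prod n i l"
        "xcoeff_prod n 0 i \<noteq> 0" "xcoeff_prod n i l \<noteq> 0"
        using xcoeff_prod_add[of n 0 i l] by (simp_all add: xcoeff_prod_nonzero)
      with True i show ?thesis by (simp add: twisted_transpose_index field_simps)
    qed auto
    finally show ?thesis .
  qed
  then have "trace (?M * ?M') =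
      (\<Sum>i<n. if i < n - l then Mkl n k l $$ (i, i + l) * Mkl n k' l $$ (i, i + l) /
        xcoeff_prod n i l else 0)"
    by (simp add: trace_def)
  also have "\<dots> = (\<Sum>a<n - l. Mkl n k l $$ (a, a + l) * Mkl n k' l $$ (a, a + l) / xcoeff_prod n a l)"
    by (rule sum_lessThan_if_less) simp
  finally show ?thesis .
qed

lemma trace_Xpow_mult_Ypow: "trace (Xmat n ^\<^sub>m k * Ymat n ^\<^sub>m k) = (\<Sum>a<n - k. xcoeff_prod n a k)"
proof -
  have "(Xmat n ^\<^sub>m k * Ymat n ^\<^sub>m k) $$ (i, i) = (if i < n - k then xcoeff_prod n i k else 0)"
    if "i < n" for i
  proof -
    have "(Xmat n ^\<^sub>m k * Ymat n ^\<^sub>m k) $$ (i, i) =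
        (\<Sum>t<n. (Xmat n ^\<^sub>m k) $$ (i, t) * (Ymat n ^\<^sub>m k) $$ (t, i))"
      using that by (simp add: index_mult_mat_sum)
    also have "\<dots> = (\<Sum>t<n. if t = i + k then xcoeff_prod n i k else 0)"
      by (rule sum.cong) (use that in \<open>auto simp: Xpow_index Ypow_index\<close>)
    finally show ?thesis by auto
  qed
  then have "trace (Xmat n ^\<^sub>m k * Ymat n ^\<^sub>m k) = (\<Sum>i<n. if i < n - k then xcoeff_prod n i k else 0)"
    by (simp add: trace_def)
  also have "\<dots> = (\<Sum>a<n - k. xcoeff_prod n a k)"
    by (rule sum_lessThan_if_less) simp
  finally show ?thesis .
qed

lemma trace_Mkl_twisted_transpose:
  assumes "l \<le> k" "l \<le> k'"
  shows "trace (Mkl n k l * twisted_transpose n (Mkl n k' l)) =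
    (if k = k' then (\<Prod>t=1..k - l. real t * (2 * real k + 1 - real t)) *
      trace (Xmat n ^\<^sub>m k * Ymat n ^\<^sub>m k) else 0)"
proof -
  let ?p = "k' - l"
  have "trace (Mkl n k l * twisted_transpose n (Mkl n k' l)) =
      (-1) ^ ?p * trace (Mkl n k l * (ad (Xmat n) ^^ ?p) (Ymat n ^\<^sub>m k'))"
    by (simp add: Mkl_def[of n k' l] twisted_transpose_lowered trace_mult_smult[of _ n])
  also have "trace (Mkl n k l * (ad (Xmat n) ^^ ?p) (Ymat n ^\<^sub>m k')) =
      (-1) ^ ?p * trace ((ad (Xmat n) ^^ ?p) (Mkl n k l) * Ymat n ^\<^sub>m k')"
    by (simp add: trace_ad_pow_mult[of "Xmat n" n])
  finally have reduce: "trace (Mkl n k l * twisted_transpose n (Mkl n k' l)) =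
      trace ((ad (Xmat n) ^^ ?p) (Mkl n k l) * Ymat n ^\<^sub>m k')"
    by (simp flip: power_mult_distrib)
  show ?thesis
  proof (cases "k < k'")
    case True
    then have "(ad (Xmat n) ^^ ?p) (Mkl n k l) = 0\<^sub>m n n"
      unfolding Mkl_def by (intro ad_Xmat_pow_lowered_eq_0) (use assms in auto)
    then show ?thesis using True reduce by (simp add: trace_def)
  next
    case False
    let ?d = "k - k'"
    have "(ad (Xmat n) ^^ ?p) (Mkl n k l) =
        (\<Prod>t\<in>{?d + 1..?d + ?p}. real t * (2 * real k + 1 - real t)) \<cdot>\<^sub>m
          (ad (Ymat n) ^^ ?d) (Xmat n ^\<^sub>m k)"
      using ad_Xmat_pow_lowered[where p = "k' - l" and m = "k - k'"] False assms
      by (simp add: Mkl_def)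
    then have "trace ((ad (Xmat n) ^^ ?p) (Mkl n k l) * Ymat n ^\<^sub>m k') =
        (\<Prod>t\<in>{?d + 1..?d + ?p}. real t * (2 * real k + 1 - real t)) *
          trace ((ad (Ymat n) ^^ ?d) (Xmat n ^\<^sub>m k) * Ymat n ^\<^sub>m k')"
      by (simp add: trace_smult_mult[of _ n])
    moreover have "trace ((ad (Ymat n) ^^ ?d) (Xmat n ^\<^sub>m k) * Ymat n ^\<^sub>m k') = 0" if "k \<noteq> k'"
      using that False by (intro trace_ad_pow_mult_pow_self[of _ n]) auto
    ultimately show ?thesis
      using reduce False by (cases "k = k'") simp_all
  qed
qed

lemma Mkl_orthogonal:
  assumes "l \<le> k" "k < n" "l \<le> k'" "k' < n"
  shows "(\<Sum>a<n - l. Mkl n k l $$ (a, a + l) * Mkl n k' l $$ (a, a + l) / xcoeff_prod n a l) =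
    (if k = k' then ckl n k l else 0)"
proof -
  have "(\<Sum>a<n - l. Mkl n k l $$ (a, a + l) * Mkl n k' l $$ (a, a + l) / xcoeff_prod n a l) =
      trace (Mkl n k l * twisted_transpose n (Mkl n k' l))"
    using assms by (simp add: trace_Mkl_twisted_transpose_eq_sum)
  also have "\<dots> = (if k = k' then (\<Prod>t=1..k - l. real t * (2 * real k + 1 - real t)) *
      trace (Xmat n ^\<^sub>m k * Ymat n ^\<^sub>m k) else 0)"
    using assms by (simp only: trace_Mkl_twisted_transpose)
  also have "\<dots> = (if k = k' then ckl n k l else 0)"
    using assms by (simp only: trace_Xpow_mult_Ypow ckl_eq_prod_mult_sum)
  finally show ?thesis .
qed

lemma Mkl_dual_orthogonal:
  assumes "l < n" "a < n - l"
  shows "(\<Sum>k\<in>{l..<n}. (Mkl n k l $$ (a, a + l))^2 / ckl n k l) = xcoeff_prod n a l"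
proof -
  let ?v = "\<lambda>r a. Mkl n (l + r) l $$ (a, a + l)"
  have "1 / xcoeff_prod n a l * (\<Sum>r<n - l. (?v r a)^2 / ckl n (l + r) l) = 1"
  proof (rule orthogonal_rows_imp_orthogonal_columns[where d = "\<lambda>a. 1 / xcoeff_prod n a l"])
    fix r assume "r < n - l"
    then show "ckl n (l + r) l \<noteq> 0" by (intro ckl_nonzero) simp
  next
    fix r r' assume "r < n - l" "r' < n - l"
    then show "(\<Sum>a<n - l. ?v r a * ?v r' a * (1 / xcoeff_prod n a l)) =
        (if r = r' then ckl n (l + r) l else 0)"
      using Mkl_orthogonal[of l "l + r" n "l + r'"] by simp
  qed (rule assms(2))
  moreover have "xcoeff_prod n a l \<noteq> 0"
    using assms by (simp add: xcoeff_prod_nonzero)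
  ultimately have "(\<Sum>r<n - l. (?v r a)^2 / ckl n (l + r) l) = xcoeff_prod n a l"
    by (simp add: divide_simps)
  moreover have "(\<Sum>k\<in>{l..<n}. (Mkl n k l $$ (a, a + l))^2 / ckl n k l) =
      (\<Sum>r<n - l. (?v r a)^2 / ckl n (l + r) l)"
    by (simp add: sum.atLeastLessThan_shift_0[of _ l n] lessThan_atLeast0)
  ultimately show ?thesis by simp
qed

section \<open>The polynomials f_kl\<close>

lemma adY_eq_ad: "adY n = ad (Ymat n)"
  by (simp add: fun_eq_iff adY_def ad_def)

lemma polyH_dim [simp]: "dim_row (polyH n p) = n" "dim_col (polyH n p) = n"
  by (simp_all add: polyH_def)

lemma Xpow_mult_polyH_index:
  assumes "i < n" "j < n"
  shows "(Xmat n ^\<^sub>m l * polyH n p) $$ (i, j) =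
    (if j = i + l then xcoeff_prod n i l * poly p (alpha n (j + 1)) else 0)"
proof -
  have "(Xmat n ^\<^sub>m l * polyH n p) $$ (i, j) = (\<Sum>t<n. (Xmat n ^\<^sub>m l) $$ (i, t) * polyH n p $$ (t, j))"
    using assms by (simp add: index_mult_mat_sum)
  also have "\<dots> = (\<Sum>t<n. if t = j then (Xmat n ^\<^sub>m l) $$ (i, t) * poly p (alpha n (j + 1)) else 0)"
    by (rule sum.cong) (use assms in \<open>auto simp: polyH_def\<close>)
  finally show ?thesis using assms by (simp add: Xpow_index)
qed

lemma Mkl_eq_Xpow_mult_polyH_iff:
  assumes "l \<le> k"
  shows "Mkl n k l = Xmat n ^\<^sub>m l * polyH n p \<longleftrightarrow>
    (\<forall>a<n - l. poly p (alpha n (a + l + 1)) = Mkl n k l $$ (a, a + l) / xcoeff_prod n a l)"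
proof -
  have "Mkl n k l $$ (i, j) = (Xmat n ^\<^sub>m l * polyH n p) $$ (i, j) \<longleftrightarrow>
      (j = i + l \<longrightarrow> poly p (alpha n (i + l + 1)) = Mkl n k l $$ (i, i + l) / xcoeff_prod n i l)"
    if "i < n" "j < n" for i j
  proof -
    have "xcoeff_prod n i l \<noteq> 0" if "j = i + l"
      using that \<open>j < n\<close> by (simp add: xcoeff_prod_nonzero)
    then show ?thesis
      using that Mkl_index_eq_0[OF assms, of i n j] by (auto simp: Xpow_mult_polyH_index field_simps)
  qed
  then have "Mkl n k l = Xmat n ^\<^sub>m l * polyH n p \<longleftrightarrow>
      (\<forall>i<n. \<forall>j<n. j = i + l \<longrightarrow>
        poly p (alpha n (i + l + 1)) = Mkl n k l $$ (i, i + l) / xcoeff_prod n i l)"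
    by (auto simp: mat_eq_iff)
  also have "\<dots> \<longleftrightarrow>
      (\<forall>a<n - l. poly p (alpha n (a + l + 1)) = Mkl n k l $$ (a, a + l) / xcoeff_prod n a l)"
    by (auto simp: less_diff_conv)
  finally show ?thesis .
qed

lemma fkl_spec:
  assumes "l \<le> k" "k < n"
  shows "degree (fkl n k l) < n - l \<and> Mkl n k l = Xmat n ^\<^sub>m l * polyH n (fkl n k l)"
proof -
  let ?P = "\<lambda>p. degree p < n - l \<and> Mkl n k l = Xmat n ^\<^sub>m l * polyH n p"
  let ?z = "\<lambda>a. alpha n (a + l + 1)"
  have z_inj: "inj_on ?z A" for A
    by (rule inj_onI) (simp add: alpha_def)
  have "\<exists>p. ?P p"
  proof -
    define N where "N = n - l - 1"
    have N: "n - l = Suc N" using assms unfolding N_def by arith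
    obtain p where deg: "degree p \<le> N"
      and interp: "\<forall>a\<le>N. poly p (?z a) = Mkl n k l $$ (a, a + l) / xcoeff_prod n a l"
      using poly_interpolation_exists[where z = ?z and N = N
          and y = "\<lambda>a. Mkl n k l $$ (a, a + l) / xcoeff_prod n a l"] z_inj
      by blast
    have "\<forall>a<n - l. poly p (?z a) = Mkl n k l $$ (a, a + l) / xcoeff_prod n a l"
      using interp N by (simp add: less_Suc_eq_le)
    moreover have "degree p < n - l" using deg N by simp
    ultimately have "?P p" using Mkl_eq_Xpow_mult_polyH_iff[OF assms(1)] by blast
    then show ?thesis ..
  qed
  moreover have "p = q" if "?P p" "?P q" for p q
  proof (rule poly_eqI_degree[where A = "?z ` {..<n - l}"])
    have "card (?z ` {..<n - l}) = n - l"
      using card_image[OF z_inj] by simp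
    then show "card (?z ` {..<n - l}) > degree p" "card (?z ` {..<n - l}) > degree q"
      using that by auto
    have "\<forall>a<n - l. poly p (?z a) = Mkl n k l $$ (a, a + l) / xcoeff_prod n a l"
      "\<forall>a<n - l. poly q (?z a) = Mkl n k l $$ (a, a + l) / xcoeff_prod n a l"
      using that Mkl_eq_Xpow_mult_polyH_iff[OF assms(1)] by blast+
    then show "poly p x = poly q x" if "x \<in> ?z ` {..<n - l}" for x
      using that by auto
  qed
  ultimately have "\<exists>!p. ?P p" by blast
  then have "?P (THE p. ?P p)" by (rule theI')
  then show ?thesis by (simp add: fkl_def Mkl_def adY_eq_ad)
qed

lemma poly_fkl_alpha:
  assumes "l \<le> k" "k < n" "a < n - l"
  shows "poly (fkl n k l) (alpha n (a + l + 1)) = Mkl n k l $$ (a, a + l) / xcoeff_prod n a l"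
  using fkl_spec[OF assms(1,2)] assms(3) Mkl_eq_Xpow_mult_polyH_iff[OF assms(1)] by blast

section \<open>Evaluation at the eigenvalues of H\<close>

lemma Tpoly_alpha:
  assumes "j \<le> i" "i \<le> n"
  shows "Tpoly n j (alpha n i) = real (i - j) * real (n - i + j)"
proof -
  have "(real n)^2 - (real n - 2 * real i + 1 + 2 * real j - 1)^2 =
      4 * ((real i - real j) * (real n - real i + real j))"
    by (simp add: power2_eq_square algebra_simps)
  then show ?thesis using assms by (simp add: Tpoly_def alpha_def of_nat_diff)
qed

lemma prod_Tpoly_alpha:
  assumes "i \<le> n" "l < i"
  shows "(\<Prod>j=1..l. Tpoly n j (alpha n i)) = xcoeff_prod n (i - l - 1) l"
  using assms(2)
proof (induction l)
  case (Suc l)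
  have "(\<Prod>j=1..Suc l. Tpoly n j (alpha n i)) = Tpoly n (Suc l) (alpha n i) * xcoeff_prod n (i - l - 1) l"
    using Suc by (simp add: prod.nat_ivl_Suc')
  also have "Tpoly n (Suc l) (alpha n i) = xcoeff n (i - Suc l - 1)"
    using Suc.prems assms by (simp add: Tpoly_alpha xcoeff_def Suc_diff_Suc)
  also have "xcoeff n (i - Suc l - 1) * xcoeff_prod n (i - l - 1) l = xcoeff_prod n (i - Suc l - 1) (Suc l)"
    using Suc.prems by (simp add: xcoeff_prod_Suc_left Suc_diff_Suc)
  finally show ?case .
qed simp

lemma Tpoly_alpha_self: "Tpoly n i (alpha n i) = 0"
  by (simp add: Tpoly_def alpha_def)

definition summand_kl :: "nat \<Rightarrow> nat \<Rightarrow> nat \<Rightarrow> real \<Rightarrow> real" where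
  "summand_kl n k l h = 1 / ckl n k l * (poly (fkl n k l) h)^2 * (\<Prod>j=1..l. Tpoly n j h)"

lemma sum_summand_kl_column:
  assumes "1 \<le> i" "i \<le> n"
  shows "(\<Sum>k\<in>{l..<n}. summand_kl n k l (alpha n i)) = (if l < i then 1 else 0)"
proof (cases "l < i")
  case True
  define a where "a = i - l - 1"
  have a: "a < n - l" "alpha n i = alpha n (a + l + 1)" "i - l - 1 = a"
    using True assms by (auto simp: a_def)
  have nz: "xcoeff_prod n a l \<noteq> 0"
    using a by (simp add: xcoeff_prod_nonzero)
  have "summand_kl n k l (alpha n i) = (Mkl n k l $$ (a, a + l))^2 / ckl n k l / xcoeff_prod n a l"
    if "k \<in> {l..<n}" for k
  proof -
    have f: "poly (fkl n k l) (alpha n i) = Mkl n k l $$ (a, a + l) / xcoeff_prod n a l"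
      using poly_fkl_alpha[of l k n a] that a by simp
    have T: "(\<Prod>j=1..l. Tpoly n j (alpha n i)) = xcoeff_prod n a l"
      using prod_Tpoly_alpha[OF assms(2) True] a(3) by simp
    show ?thesis
      unfolding summand_kl_def f T using nz by (simp add: field_simps power2_eq_square)
  qed
  then have "(\<Sum>k\<in>{l..<n}. summand_kl n k l (alpha n i)) =
      (\<Sum>k\<in>{l..<n}. (Mkl n k l $$ (a, a + l))^2 / ckl n k l) / xcoeff_prod n a l"
    by (simp add: sum_divide_distrib)
  also have "\<dots> = 1"
    using a nz True assms by (simp add: Mkl_dual_orthogonal)
  finally show ?thesis using True by simp
next
  case False
  then have "i \<in> {1..l}" using assms by simp
  then have T: "(\<Prod>j=1..l. Tpoly n j (alpha n i)) = 0"
    using prod_zero[of "{1..l}" "\<lambda>j. Tpoly n j (alpha n i)"] Tpoly_alpha_self by blast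
  show ?thesis unfolding summand_kl_def T using False by simp
qed

lemma sum_summands_at_alpha:
  assumes "1 \<le> i" "i \<le> n"
  shows "(\<Sum>k<n. summand_kl n k 0 (alpha n i) + 2 * (\<Sum>l=1..k. summand_kl n k l (alpha n i))
    - (2 * real k + 1) / real n) = - alpha n i"
proof -
  let ?w = "\<lambda>k l. summand_kl n k l (alpha n i)"
  have "(\<Sum>k<n. ?w k 0) = 1"
    using sum_summand_kl_column[OF assms, of 0] assms by (simp add: lessThan_atLeast0)
  moreover have "(\<Sum>k<n. \<Sum>l=1..k. ?w k l) = real (i - 1)"
  proof -
    have "{1..<n} \<inter> {l. l < i} = {1..<i}"
      using assms by auto
    have "(\<Sum>k<n. \<Sum>l=1..k. ?w k l) = (\<Sum>l\<in>{1..<n}. \<Sum>k\<in>{l..<n}. ?w k l)"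
      by (rule sum_lower_triangle_swap)
    also have "\<dots> = (\<Sum>l\<in>{1..<n}. if l < i then 1 else 0)"
      using assms by (simp add: sum_summand_kl_column)
    also have "\<dots> = real (i - 1)"
      using \<open>{1..<n} \<inter> {l. l < i} = {1..<i}\<close> by (simp add: sum.If_cases)
    finally show ?thesis .
  qed
  moreover have "(\<Sum>k<n. (2 * real k + 1) / real n) = real n"
    using assms by (simp add: sum_divide_distrib[symmetric] sum_odd_numbers power2_eq_square)
  ultimately show ?thesis
    using assms by (simp add: sum.distrib sum_subtractf sum_distrib_left[symmetric] alpha_def of_nat_diff)
qed

theorem proposition8p3p2:
  fixes n :: nat
  assumes "n \<ge> 1"
  shows "\<forall>i\<in>{1..n}.
    (\<Sum>k=0..n-1.
        (1 / ckl n k 0) * (poly (fkl n k 0) (alpha n i))^2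
      + 2 * (\<Sum>l=1..k. (1 / ckl n k l) * (poly (fkl n k l) (alpha n i))^2
                         * (\<Prod>j=1..l. Tpoly n j (alpha n i)))
      - (2 * real k + 1) / real n)
    = - alpha n i"
proof -
  have "{0..n - 1} = {..<n}" using assms by auto
  then show ?thesis using sum_summands_at_alpha by (simp add: summand_kl_def)
qed

end
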